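(* Let $T(z)=\sum_{n\ge1} n^{n-1}\frac{z^n}{n!}$, $T_0(z)=\frac{1}{1-T(z)}$ and $T_2(z)=\sum_{n\ge1} n^{n-2}\frac{z^n}{n!}$. Define polynomials $F_n,G_n,H_n$ ($n\ge1$) by $F_1(x)=G_1(x)=H_1(x)=1$ and \[F_{n+1}(x)=(2n+2+(n+2)x)F_n(x)+(1+x)^2F_n'(x),\] \[G_{n+1}(x)=(2n+nx)G_n(x)+(1+x)^2G_n'(x),\] \[H_{n+1}(x)=(2n-1+(n-1)x)H_n(x)+(1+x)^2H_n'(x).\] Then for every $n\ge1$, \[\frac{d^n}{dz^n}T_0(z)=\frac{e^{nT(z)}}{(1-T(z))^{n+2}}F_n\!\left(\frac{T(z)}{1-T(z)}\right),\qquad \frac{d^n}{dz^n}T(z)=\frac{e^{nT(z)}}{(1-T(z))^{n}}G_n\!\left(\frac{T(z)}{1-T(z)}\right),\] \[\frac{d^n}{dz^n}T_2(z)=\frac{e^{nT(z)}}{(1-T(z))^{n-1}}H_n\!\left(\frac{T(z)}{1-T(z)}\right).\]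
   Context: $T(z)$ is the tree function (exponential generating function of rooted labeled trees), analytic for $|z|<1/e$ and satisfying $T(z)=ze^{T(z)}$; equivalently $T(z)=-W(-z)$ where $W$ is the principal branch of Lambert's W function. The identities may be read as identities of analytic functions near $0$ or of formal power series in $z$. *)

theory Defs
  imports "HOL-Computational_Algebra.Computational_Algebra"
begin

definition treeT :: "real fps" where
  "treeT = Abs_fps (\<lambda>n. if n = 0 then 0 else of_nat n ^ (n - 1) / fact n)"

definition treeT0 :: "real fps" where
  "treeT0 = inverse (1 - treeT)"

text \<open>T_2(z) = sum_{n>=1} n^(n-2) z^n/n! (for n = 1 the coefficient is 1^(-1) = 1).\<close>
definition treeT2 :: "real fps" where
  "treeT2 = Abs_fps (\<lambda>n. if n = 0 then 0 else if n = 1 then 1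
                          else of_nat n ^ (n - 2) / fact n)"

text \<open>Polynomials F_n, G_n, H_n for n >= 1 (the value at index 0 is irrelevant).\<close>
fun Fpoly :: "nat \<Rightarrow> real poly" where
  "Fpoly 0 = 0"
| "Fpoly (Suc 0) = 1"
| "Fpoly (Suc (Suc n)) =
     [:2 * of_nat (Suc n) + 2, of_nat (Suc n) + 2:] * Fpoly (Suc n)
     + [:1, 1:] ^ 2 * pderiv (Fpoly (Suc n))"

fun Gpoly :: "nat \<Rightarrow> real poly" where
  "Gpoly 0 = 0"
| "Gpoly (Suc 0) = 1"
| "Gpoly (Suc (Suc n)) =
     [:2 * of_nat (Suc n), of_nat (Suc n):] * Gpoly (Suc n)
     + [:1, 1:] ^ 2 * pderiv (Gpoly (Suc n))"

fun Hpoly :: "nat \<Rightarrow> real poly" where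
  "Hpoly 0 = 0"
| "Hpoly (Suc 0) = 1"
| "Hpoly (Suc (Suc n)) =
     [:2 * of_nat (Suc n) - 1, of_nat (Suc n) - 1:] * Hpoly (Suc n)
     + [:1, 1:] ^ 2 * pderiv (Hpoly (Suc n))"

definition poly_fps :: "real poly \<Rightarrow> real fps \<Rightarrow> real fps" where
  "poly_fps p f = poly (map_poly fps_const p) f"

end

theory Submission
  imports Defs
begin

text \<open>
  The series T is the compositional inverse of z e^(-z), so T = z e^T. Differentiating
  e^(aT) and using T' = e^T (1 + z T') relates e^(aT) to e^((a+1)T); induction on the
  coefficient index, shifting a to a + 1, then gives [z^n] e^(aT) = a (a + n)^(n-1) / n!,
  and for a = 1 this identifies the inverse with the series treeT.

  With T0 = 1/(1 - T) and W = T/(1 - T) = T0 - 1 one has T' = e^T T0 and T0' = W' = e^T T0^3.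
  Hence the derivative of e^(aT) T0^m P(W) is e^((a+1)T) T0^(m+1) Q(W) with
  Q = (a + m + m x) P + (1 + x)^2 P', and the recurrences for F_n, G_n, H_n are this rule
  with a = n and m = n + 2, n, n - 1 respectively.
\<close>

lemma fps_exp_compose_add:
  fixes S :: "'a::field_char_0 fps"
  assumes "S $ 0 = 0"
  shows "(fps_exp a oo S) * (fps_exp b oo S) = fps_exp (a + b) oo S"
  by (simp add: fps_exp_add_mult fps_compose_mult_distrib[OF assms])

lemma fps_deriv_exp_compose:
  fixes S :: "'a::field_char_0 fps"
  assumes "S $ 0 = 0"
  shows "fps_deriv (fps_exp a oo S) = fps_const a * (fps_exp a oo S) * fps_deriv S"
  by (simp add: fps_compose_deriv[OF assms] fps_compose_mult_distrib[OF assms])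

lemma poly_fps_0 [simp]: "poly_fps 0 W = 0"
  by (simp add: poly_fps_def)

lemma poly_fps_pCons [simp]: "poly_fps (pCons a p) W = fps_const a + W * poly_fps p W"
  by (simp add: poly_fps_def map_poly_pCons)

lemma poly_fps_1 [simp]: "poly_fps 1 W = 1"
  by (simp add: one_pCons)

lemma poly_fps_add [simp]: "poly_fps (p + q) W = poly_fps p W + poly_fps q W"
proof (induction p arbitrary: q)
  case (pCons a p)
  obtain b q' where "q = pCons b q'"
    by (cases q) auto
  then show ?case
    by (simp add: pCons.IH algebra_simps)
qed simp

lemma poly_fps_smult [simp]: "poly_fps (smult c p) W = fps_const c * poly_fps p W"
  by (induction p) (simp_all add: algebra_simps)

lemma poly_fps_mult [simp]: "poly_fps (p * q) W = poly_fps p W * poly_fps q W"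
  by (induction p) (simp_all add: algebra_simps)

lemma poly_fps_power [simp]: "poly_fps (p ^ k) W = poly_fps p W ^ k"
  by (induction k) simp_all

lemma fps_deriv_poly_fps: "fps_deriv (poly_fps p W) = poly_fps (pderiv p) W * fps_deriv W"
  by (induction p) (simp_all add: pderiv_pCons algebra_simps)

lemma tree_solution_exp_recurrence:
  fixes S :: "real fps"
  assumes S0: "S $ 0 = 0" and S_eq: "S = fps_X * (fps_exp 1 oo S)"
  shows "fps_const (a + 1) * fps_deriv (fps_exp a oo S) =
           fps_const a * (fps_X * fps_deriv (fps_exp (a + 1) oo S))
           + fps_const (a * (a + 1)) * (fps_exp (a + 1) oo S)"
proof -
  define E where "E b = fps_exp b oo S" for b
  have E_add: "E (a + 1) = E a * E 1"
    unfolding E_def by (simp add: fps_exp_compose_add[OF S0])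
  have E_deriv: "fps_deriv (E b) = fps_const b * E b * fps_deriv S" for b
    unfolding E_def by (rule fps_deriv_exp_compose[OF S0])
  have S_deriv: "fps_deriv S = E 1 * (1 + fps_X * fps_deriv S)"
  proof -
    have "fps_deriv S = fps_deriv (fps_X * E 1)" using S_eq by (simp add: E_def)
    also have "\<dots> = E 1 + fps_X * (E 1 * fps_deriv S)" by (simp add: E_deriv)
    finally show ?thesis by (simp add: algebra_simps)
  qed
  have "fps_const a * (fps_X * fps_deriv (E (a + 1))) + fps_const (a * (a + 1)) * E (a + 1)
      = fps_const a * fps_const (a + 1) * E a * (E 1 * (1 + fps_X * fps_deriv S))"
  proof -
    have "fps_deriv (E (a + 1)) = fps_const (a + 1) * E a * E 1 * fps_deriv S"
      by (simp add: E_deriv flip: E_add)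
    then show ?thesis
      unfolding E_add by (simp add: algebra_simps flip: fps_const_add fps_const_mult)
  qed
  also have "\<dots> = fps_const a * fps_const (a + 1) * E a * fps_deriv S"
    by (simp only: S_deriv[symmetric])
  also have "\<dots> = fps_const (a + 1) * fps_deriv (E a)"
    by (simp add: E_deriv algebra_simps)
  finally show ?thesis by (simp add: E_def)
qed

lemma tree_solution_exp_coeff:
  fixes S :: "real fps"
  assumes S0: "S $ 0 = 0" and S_eq: "S = fps_X * (fps_exp 1 oo S)" and "a \<ge> 0"
  shows "(fps_exp a oo S) $ Suc n = a * (a + of_nat (Suc n)) ^ n / fact (Suc n)"
  using \<open>a \<ge> 0\<close>
proof (induction n arbitrary: a)
  case 0
  have "(a + 1) * (fps_exp a oo S) $ 1 = a * (a + 1)"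
    using arg_cong[OF tree_solution_exp_recurrence[OF S0 S_eq, of a], of "\<lambda>f. f $ 0"]
    by (simp add: S0)
  with 0 show ?case by simp
next
  case (Suc m)
  have IH: "(fps_exp (a + 1) oo S) $ Suc m = (a + 1) * (a + of_nat m + 2) ^ m / fact (Suc m)"
    using Suc.IH[of "a + 1"] Suc.prems by (simp add: add_ac)
  have "(a + 1) * (of_nat m + 2) * (fps_exp a oo S) $ Suc (Suc m) =
          a * (a + of_nat m + 2) * (fps_exp (a + 1) oo S) $ Suc m"
    using arg_cong[OF tree_solution_exp_recurrence[OF S0 S_eq, of a], of "\<lambda>f. f $ Suc m"]
    by (simp add: fps_deriv_nth algebra_simps)
  also have "\<dots> = (a + 1) * (a * (a + of_nat m + 2) ^ Suc m / fact (Suc m))"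
    unfolding IH by (simp add: field_simps)
  finally have "(a + 1) * ((of_nat m + 2) * (fps_exp a oo S) $ Suc (Suc m)) =
                  (a + 1) * (a * (a + of_nat m + 2) ^ Suc m / fact (Suc m))"
    by (simp only: mult.assoc)
  then have "(of_nat m + 2) * (fps_exp a oo S) $ Suc (Suc m) =
               a * (a + of_nat m + 2) ^ Suc m / fact (Suc m)"
    using Suc.prems by (simp only: mult_left_cancel)
  then have "(fps_exp a oo S) $ Suc (Suc m) =
               a * (a + of_nat m + 2) ^ Suc m / fact (Suc m) / (of_nat m + 2)"
    by (subst eq_divide_eq) (simp add: mult.commute)
  moreover have "fact (Suc (Suc m)) = (of_nat m + 2) * (fact (Suc m) :: real)"
    by (simp add: algebra_simps)
  ultimately show ?case
    by (simp add: add_ac mult.commute)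
qed

lemma tree_solution_exp1_coeff:
  fixes S :: "real fps"
  assumes S0: "S $ 0 = 0" and S_eq: "S = fps_X * (fps_exp 1 oo S)"
  shows "(fps_exp 1 oo S) $ n = of_nat (Suc n) ^ n / fact (Suc n)"
proof (cases n)
  case 0
  then show ?thesis by (simp add: S0)
next
  case (Suc m)
  have "fact (Suc (Suc m)) = (of_nat m + 2) * (fact (Suc m) :: real)"
    by (simp add: algebra_simps)
  with Suc show ?thesis
    using tree_solution_exp_coeff[OF S0 S_eq, of 1 m] by (simp add: add_ac)
qed

lemma treeT_eq: "treeT = fps_X * (fps_exp 1 oo treeT)"
proof -
  define S where "S = fps_inv (fps_X * fps_exp (-1) :: real fps)"
  have S0: "S $ 0 = 0"
    by (simp add: S_def fps_inv_def)
  have "(fps_X * fps_exp (-1)) oo S = fps_X"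
    unfolding S_def by (rule fps_inv_right) simp_all
  then have "S * (fps_exp (-1) oo S) * (fps_exp 1 oo S) = fps_X * (fps_exp 1 oo S)"
    by (simp add: fps_compose_mult_distrib[OF S0] S0)
  then have S_eq: "S = fps_X * (fps_exp 1 oo S)"
    by (simp add: mult.assoc fps_exp_compose_add[OF S0])
  have "S = treeT"
  proof (rule fps_ext)
    show "S $ n = treeT $ n" for n
    proof (cases n)
      case (Suc m)
      have "S $ Suc m = (fps_exp 1 oo S) $ m"
        by (subst S_eq) simp
      with Suc show ?thesis
        by (simp add: treeT_def tree_solution_exp1_coeff[OF S0 S_eq])
    qed (simp add: S0 treeT_def)
  qed
  with S_eq show ?thesis by simp
qed

lemma treeT_nth_0 [simp]: "treeT $ 0 = 0"
  by (simp add: treeT_def)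

definition tree_exp :: "real \<Rightarrow> real fps" where
  "tree_exp a = fps_exp a oo treeT"

lemma tree_exp_add: "tree_exp a * tree_exp b = tree_exp (a + b)"
  unfolding tree_exp_def by (simp add: fps_exp_compose_add)

lemma fps_deriv_tree_exp: "fps_deriv (tree_exp a) = fps_const a * tree_exp a * fps_deriv treeT"
  unfolding tree_exp_def by (simp add: fps_deriv_exp_compose)

lemma treeT0_mult_one_minus_treeT: "treeT0 * (1 - treeT) = 1"
  unfolding treeT0_def by (rule inverse_mult_eq_1) simp

lemma divide_one_minus_treeT_power: "f / (1 - treeT) ^ k = f * treeT0 ^ k"
proof -
  have "((1 - treeT) ^ k) $ 0 = 1"
    by (induction k) simp_all
  then show ?thesis
    by (simp add: fps_divide_unit fps_inverse_power treeT0_def)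
qed

lemma one_plus_treeT_ratio: "1 + treeT / (1 - treeT) = treeT0"
proof -
  have "treeT0 = treeT0 * (1 - treeT) + treeT * treeT0"
    by (simp add: algebra_simps)
  then show ?thesis
    using divide_one_minus_treeT_power[of treeT 1] by (simp add: treeT0_mult_one_minus_treeT)
qed

lemma fps_deriv_treeT: "fps_deriv treeT = tree_exp 1 * treeT0"
proof -
  have T_eq: "treeT = fps_X * tree_exp 1"
    using treeT_eq by (simp add: tree_exp_def)
  have "fps_deriv treeT = fps_deriv (fps_X * tree_exp 1)"
    using T_eq by (rule arg_cong)
  also have "\<dots> = tree_exp 1 + fps_X * tree_exp 1 * fps_deriv treeT"
    by (simp add: fps_deriv_tree_exp algebra_simps)
  finally have "tree_exp 1 + treeT * fps_deriv treeT = fps_deriv treeT"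
    by (simp flip: T_eq)
  then have "fps_deriv treeT * (1 - treeT) = tree_exp 1"
    by (auto simp: algebra_simps dest: add_implies_diff)
  then have "fps_deriv treeT * (treeT0 * (1 - treeT)) = tree_exp 1 * treeT0"
    by (metis mult.assoc mult.commute)
  then show ?thesis
    by (simp add: treeT0_mult_one_minus_treeT)
qed

lemma fps_deriv_treeT0: "fps_deriv treeT0 = tree_exp 1 * treeT0 ^ 3"
proof -
  have "fps_deriv treeT0 = fps_deriv treeT * treeT0 ^ 2"
    unfolding treeT0_def by (simp add: fps_inverse_deriv)
  then show ?thesis
    by (simp add: fps_deriv_treeT power2_eq_square power3_eq_cube mult.assoc)
qed

lemma fps_deriv_treeT0_power:
  "fps_deriv (treeT0 ^ m) = fps_const (of_nat m) * tree_exp 1 * treeT0 ^ (m + 2)"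
proof (cases m)
  case (Suc j)
  have "3 + j = m + 2"
    using Suc by simp
  then have pow: "treeT0 ^ 3 * treeT0 ^ j = treeT0 ^ (m + 2)"
    by (simp only: power_add[symmetric])
  have "fps_deriv (treeT0 ^ m) = fps_const (of_nat m) * (tree_exp 1 * treeT0 ^ 3) * treeT0 ^ j"
    unfolding fps_deriv_power fps_deriv_treeT0 Suc diff_Suc_1 ..
  then show ?thesis
    by (simp only: mult.assoc pow)
qed simp

lemma fps_deriv_treeT_ratio: "fps_deriv (treeT / (1 - treeT)) = tree_exp 1 * treeT0 ^ 3"
proof -
  have "treeT / (1 - treeT) = treeT0 - 1"
    using one_plus_treeT_ratio by (simp add: algebra_simps)
  then show ?thesis
    by (simp add: fps_deriv_treeT0)
qed

lemma fps_deriv_treeT2: "fps_deriv treeT2 = tree_exp 1"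
proof (rule fps_ext)
  fix n
  have "fps_deriv treeT2 $ n = of_nat (Suc n) ^ n / fact (Suc n)"
    by (cases n) (simp_all add: treeT2_def fps_deriv_nth field_simps del: of_nat_Suc)
  then show "fps_deriv treeT2 $ n = tree_exp 1 $ n"
    by (simp add: tree_exp_def tree_solution_exp1_coeff[OF treeT_nth_0 treeT_eq])
qed

lemma fps_deriv_tree_exp_poly_fps:
  "fps_deriv (tree_exp a * treeT0 ^ m * poly_fps P (treeT / (1 - treeT))) =
     tree_exp (a + 1) * treeT0 ^ (m + 1) *
     poly_fps ([:a + of_nat m, of_nat m:] * P + [:1, 1:] ^ 2 * pderiv P) (treeT / (1 - treeT))"
proof -
  define W where "W = treeT / (1 - treeT)"
  have W_eq: "W = treeT0 - 1"
    using one_plus_treeT_ratio by (simp add: W_def algebra_simps)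
  have linear: "poly_fps [:a + of_nat m, of_nat m:] W = fps_const a + fps_const (of_nat m) * treeT0"
    by (simp add: W_eq algebra_simps flip: fps_const_add)
  have square: "poly_fps ([:1, 1:] ^ 2) W = treeT0 ^ 2"
    by (simp add: W_eq)
  have W_deriv: "fps_deriv W = tree_exp 1 * treeT0 ^ 3"
    unfolding W_def by (rule fps_deriv_treeT_ratio)
  have "fps_deriv (tree_exp a * treeT0 ^ m * poly_fps P W) =
          tree_exp a * tree_exp 1 * treeT0 ^ (m + 1) *
          ((fps_const a + fps_const (of_nat m) * treeT0) * poly_fps P W
           + treeT0 ^ 2 * poly_fps (pderiv P) W)"
    by (simp add: fps_deriv_tree_exp fps_deriv_treeT fps_deriv_treeT0_power
          fps_deriv_poly_fps W_deriv algebra_simps power2_eq_square power3_eq_cube)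
  then show ?thesis
    unfolding W_def[symmetric] poly_fps_add poly_fps_mult linear square
      tree_exp_add[of a 1, symmetric] .
qed

lemma iterated_fps_deriv_tree_closed_form:
  fixes P :: "nat \<Rightarrow> real poly" and c :: nat
  assumes base: "fps_deriv f = tree_exp 1 * treeT0 ^ c * poly_fps (P 1) (treeT / (1 - treeT))"
    and step: "\<And>k. P (Suc (Suc k)) =
      [:of_nat (Suc k) + of_nat (k + c), of_nat (k + c):] * P (Suc k)
      + [:1, 1:] ^ 2 * pderiv (P (Suc k))"
  shows "(fps_deriv ^^ Suc k) f =
           tree_exp (of_nat (Suc k)) * treeT0 ^ (k + c) * poly_fps (P (Suc k)) (treeT / (1 - treeT))"
proof (induction k)
  case 0
  then show ?case by (simp add: base)
next
  case (Suc k)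
  have "(fps_deriv ^^ Suc (Suc k)) f = fps_deriv ((fps_deriv ^^ Suc k) f)"
    by simp
  also have "\<dots> = tree_exp (of_nat (Suc k) + 1) * treeT0 ^ (k + c + 1)
                      * poly_fps (P (Suc (Suc k))) (treeT / (1 - treeT))"
    unfolding Suc.IH fps_deriv_tree_exp_poly_fps step ..
  finally show ?case
    by (simp add: add_ac)
qed

theorem mainTheorem1:
  fixes n :: nat
  assumes "n \<ge> 1"
  shows "(fps_deriv ^^ n) treeT0 =
           fps_compose (fps_exp (of_nat n)) treeT / (1 - treeT) ^ (n + 2)
           * poly_fps (Fpoly n) (treeT / (1 - treeT)) \<and>
         (fps_deriv ^^ n) treeT =
           fps_compose (fps_exp (of_nat n)) treeT / (1 - treeT) ^ n
           * poly_fps (Gpoly n) (treeT / (1 - treeT)) \<and>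
         (fps_deriv ^^ n) treeT2 =
           fps_compose (fps_exp (of_nat n)) treeT / (1 - treeT) ^ (n - 1)
           * poly_fps (Hpoly n) (treeT / (1 - treeT))"
proof -
  obtain k where n: "n = Suc k"
    using assms by (cases n) auto
  have "(fps_deriv ^^ Suc k) treeT0 =
          tree_exp (Suc k) * treeT0 ^ (k + 3) * poly_fps (Fpoly (Suc k)) (treeT / (1 - treeT))"
    by (rule iterated_fps_deriv_tree_closed_form) (simp_all add: fps_deriv_treeT0 add_ac)
  moreover have "(fps_deriv ^^ Suc k) treeT =
          tree_exp (Suc k) * treeT0 ^ (k + 1) * poly_fps (Gpoly (Suc k)) (treeT / (1 - treeT))"
    by (rule iterated_fps_deriv_tree_closed_form) (simp_all add: fps_deriv_treeT)
  moreover have "(fps_deriv ^^ Suc k) treeT2 =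
          tree_exp (Suc k) * treeT0 ^ (k + 0) * poly_fps (Hpoly (Suc k)) (treeT / (1 - treeT))"
    by (rule iterated_fps_deriv_tree_closed_form) (simp_all add: fps_deriv_treeT2 add_ac)
  ultimately show ?thesis
    unfolding divide_one_minus_treeT_power tree_exp_def[symmetric] n by (simp add: numeral_3_eq_3)
qed

end
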